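(* Let $\tau$ be a topology on $\mathbb{R}$ such that $\tau_e\subset\tau$ and every nonempty $\tau$-open set has the Baire property and is non-meager (with respect to the Euclidean topology). Then every $\tau$-Świątkowski function $f\colon\mathbb{R}\to\mathbb{R}$ has the Baire property.
   Context: $\tau_e$ is the Euclidean topology on $\mathbb{R}$. For a topology $\tau$ on $\mathbb{R}$ and $f\colon\mathbb{R}\to\mathbb{R}$, $\mathrm{C}_\tau(f)$ is the set of points $x$ at which $f$ is continuous as a map from $(\mathbb{R},\tau)$ to $\mathbb{R}$ with the Euclidean topology. $f$ is a $\tau$-Świątkowski function if for all $a,b\in\mathbb{R}$ with $f(a)<f(b)$ there exists $x\in\mathrm{C}_\tau(f)$ lying strictly between $a$ and $b$ with $f(a)<f(x)<f(b)$. A function has the Baire property if preimages of open sets are of the form $O\triangle M$ with $O$ open and $M$ meager. *)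

theory Defs
  imports "HOL-Analysis.Analysis"
begin

definition nowhere_dense :: "real set \<Rightarrow> bool" where
  "nowhere_dense A \<longleftrightarrow> interior (closure A) = {}"

definition meager :: "real set \<Rightarrow> bool" where
  "meager A \<longleftrightarrow> (\<exists>F. countable F \<and> (\<forall>N\<in>F. nowhere_dense N) \<and> A \<subseteq> \<Union>F)"

definition baire_set :: "real set \<Rightarrow> bool" where
  "baire_set A \<longleftrightarrow> (\<exists>G M. open G \<and> meager M \<and> A = (G - M) \<union> (M - G))"

definition baire_fun :: "(real \<Rightarrow> real) \<Rightarrow> bool" where
  "baire_fun f \<longleftrightarrow> (\<forall>V. open V \<longrightarrow> baire_set (f -` V))"

definition cont_points :: "real topology \<Rightarrow> (real \<Rightarrow> real) \<Rightarrow> real set" where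
  "cont_points T f = {x. \<forall>V. open V \<and> f x \<in> V \<longrightarrow>
      (\<exists>U. openin T U \<and> x \<in> U \<and> f ` U \<subseteq> V)}"

definition swiatkowski :: "real topology \<Rightarrow> (real \<Rightarrow> real) \<Rightarrow> bool" where
  "swiatkowski T f \<longleftrightarrow> (\<forall>a b. f a < f b \<longrightarrow>
      (\<exists>x\<in>cont_points T f. min a b < x \<and> x < max a b \<and> f a < f x \<and> f x < f b))"

end

theory Submission
  imports Defs
begin

text \<open>
  The \<open>\<tau>\<close>-Swiatkowski property forces the set \<open>C\<close> of \<open>\<tau>\<close>-continuity points of \<open>f\<close> to be
  dense: either \<open>f\<close> is constant on an interval, whose points are then continuity points, or
  it takes two different values there and the property supplies a continuity point in between.
  \<open>C\<close> is the intersection of the \<open>\<tau>\<close>-open sets \<open>O\<^sub>n\<close> on which \<open>f\<close> locally oscillates by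
  less than \<open>1/(n+1)\<close>. Each \<open>O\<^sub>n\<close> is a \<open>\<tau>\<close>-open set containing the dense set \<open>C\<close>; it differs
  from an open set \<open>G\<close> by a meager set, and \<open>G\<close> must be dense since otherwise
  \<open>O\<^sub>n - closure G\<close> would be a nonempty meager \<open>\<tau>\<close>-open set. So each complement \<open>-O\<^sub>n\<close> and
  hence \<open>-C\<close> is meager. Finally \<open>f\<^sup>-\<^sup>1(V)\<close> differs from its \<open>\<tau>\<close>-interior only by
  discontinuity points, and that \<open>\<tau>\<close>-interior has the Baire property.
\<close>

lemma meager_subset: "meager B \<Longrightarrow> A \<subseteq> B \<Longrightarrow> meager A"
  unfolding meager_def by (meson order_trans)

lemma meager_Un: "meager A \<Longrightarrow> meager B \<Longrightarrow> meager (A \<union> B)"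
proof -
  assume "meager A" "meager B"
  then obtain F1 F2 where "countable F1" "\<forall>N\<in>F1. nowhere_dense N" "A \<subseteq> \<Union>F1"
    and "countable F2" "\<forall>N\<in>F2. nowhere_dense N" "B \<subseteq> \<Union>F2"
    unfolding meager_def by blast
  then show ?thesis
    unfolding meager_def by (intro exI[of _ "F1 \<union> F2"]) auto
qed

lemma meager_UN:
  assumes "\<And>n::nat. meager (A n)"
  shows "meager (\<Union>n. A n)"
proof -
  have "\<forall>n. \<exists>F. countable F \<and> (\<forall>N\<in>F. nowhere_dense N) \<and> A n \<subseteq> \<Union>F"
    using assms unfolding meager_def by blast
  then obtain F where "\<forall>n. countable (F n) \<and> (\<forall>N\<in>F n. nowhere_dense N) \<and> A n \<subseteq> \<Union>(F n)"
    by (metis choice)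
  then have "countable (\<Union>n. F n)" "\<forall>N\<in>(\<Union>n. F n). nowhere_dense N"
    "(\<Union>n. A n) \<subseteq> \<Union>(\<Union>n. F n)"
    by (auto simp: Union_iff UN_subset_iff) (meson UnionE subsetD)
  then show ?thesis
    unfolding meager_def by blast
qed

lemma nowhere_dense_imp_meager: "nowhere_dense N \<Longrightarrow> meager N"
  unfolding meager_def by (intro exI[of _ "{N}"]) auto

lemma nowhere_dense_closure_Diff_open:
  assumes "open G"
  shows "nowhere_dense (closure G - G)"
proof -
  have "closed (closure G - G)"
    using assms by (simp add: closed_Diff)
  moreover have "interior (closure G - G) \<inter> closure G = {}"
    using open_Int_closure_eq_empty[of "interior (closure G - G)" G] interior_subset
    by blast
  then have "interior (closure G - G) = {}"
    using interior_subset by blast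
  ultimately show ?thesis
    unfolding nowhere_dense_def by (simp add: closure_closed)
qed

lemma baire_set_empty: "baire_set {}"
  unfolding baire_set_def meager_def by (intro exI[of _ "{}"]) auto

lemma baire_set_meager_sym_diff:
  assumes "baire_set A" and "meager ((A - B) \<union> (B - A))"
  shows "baire_set B"
proof -
  obtain G M where GM: "open G" "meager M" "A = (G - M) \<union> (M - G)"
    using assms(1) unfolding baire_set_def by blast
  define M' where "M' = (B - G) \<union> (G - B)"
  have "M' \<subseteq> M \<union> ((A - B) \<union> (B - A))"
    unfolding M'_def GM(3) by blast
  then have "meager M'"
    using meager_subset meager_Un[OF GM(2) assms(2)] by blast
  moreover have "B = (G - M') \<union> (M' - G)"
    unfolding M'_def by blast
  ultimately show ?thesis
    unfolding baire_set_def using GM(1) by blast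
qed

lemma swiatkowski_cont_points_dense:
  assumes "swiatkowski T f" and "\<forall>U. open U \<longrightarrow> openin T U"
    and "open V" and "V \<noteq> {}"
  shows "cont_points T f \<inter> V \<noteq> {}"
proof -
  obtain c e where "e > 0" "ball c e \<subseteq> V"
    using assms(3,4) open_contains_ball by blast
  moreover have "{c - e<..<c + e} \<subseteq> ball c e"
    by (auto simp: dist_real_def)
  ultimately have interval: "{c - e<..<c + e} \<subseteq> V"
    by blast
  have "\<exists>x\<in>cont_points T f. c - e < x \<and> x < c + e"
  proof (cases "\<exists>u v. u \<in> {c - e<..<c + e} \<and> v \<in> {c - e<..<c + e} \<and> f u < f v")
    case True
    then obtain u v where "u \<in> {c - e<..<c + e}" "v \<in> {c - e<..<c + e}" "f u < f v"
      by blast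
    moreover obtain x where "x \<in> cont_points T f" "min u v < x" "x < max u v"
      using assms(1)[unfolded swiatkowski_def, rule_format, OF \<open>f u < f v\<close>] by blast
    ultimately show ?thesis
      by (intro bexI[of _ x]) (auto simp: min_def max_def split: if_splits)
  next
    case False
    have "c \<in> {c - e<..<c + e}"
      using \<open>e > 0\<close> by simp
    have "f u = f c" if "u \<in> {c - e<..<c + e}" for u
    proof -
      have "\<not> f u < f c" "\<not> f c < f u"
        using False that \<open>c \<in> {c - e<..<c + e}\<close> by blast+
      then show ?thesis
        by linarith
    qed
    then have const: "f ` {c - e<..<c + e} \<subseteq> {f c}"
      by blast
    have "c \<in> cont_points T f"
      unfolding cont_points_def
    proof (intro CollectI allI impI)
      fix W :: "real set"
      assume "open W \<and> f c \<in> W"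
      moreover have "openin T {c - e<..<c + e}"
        using assms(2) by simp
      ultimately show "\<exists>U. openin T U \<and> c \<in> U \<and> f ` U \<subseteq> W"
        using \<open>c \<in> {c - e<..<c + e}\<close> const
        by (intro exI[of _ "{c - e<..<c + e}"] conjI) auto
    qed
    then show ?thesis
      using \<open>e > 0\<close> by (intro bexI[of _ c]) simp_all
  qed
  then show ?thesis
    using interval by auto
qed

definition small_oscillation_set :: "real topology \<Rightarrow> (real \<Rightarrow> real) \<Rightarrow> real \<Rightarrow> real set" where
  "small_oscillation_set T f e =
     \<Union>{U. openin T U \<and> (\<forall>y\<in>U. \<forall>z\<in>U. \<bar>f y - f z\<bar> < e)}"

lemma openin_small_oscillation_set: "openin T (small_oscillation_set T f e)"
  unfolding small_oscillation_set_def by (rule openin_Union) auto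

lemma cont_points_subset_small_oscillation_set:
  assumes "e > 0"
  shows "cont_points T f \<subseteq> small_oscillation_set T f e"
proof
  fix x
  assume "x \<in> cont_points T f"
  moreover have "open (ball (f x) (e / 2)) \<and> f x \<in> ball (f x) (e / 2)"
    using assms by simp
  ultimately obtain U where U: "openin T U" "x \<in> U" "f ` U \<subseteq> ball (f x) (e / 2)"
    unfolding cont_points_def by blast
  have "\<bar>f y - f z\<bar> < e" if "y \<in> U" "z \<in> U" for y z
  proof -
    have "dist (f y) (f x) < e / 2" "dist (f z) (f x) < e / 2"
      using U(3) that by (auto simp: dist_commute)
    then have "dist (f y) (f z) < e"
      by (rule dist_triangle_half_l)
    then show ?thesis
      by (simp add: dist_real_def)
  qed
  then show "x \<in> small_oscillation_set T f e"
    unfolding small_oscillation_set_def using U(1,2) by blast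
qed

lemma INT_small_oscillation_set_subset_cont_points:
  "(\<Inter>n. small_oscillation_set T f (inverse (Suc n))) \<subseteq> cont_points T f"
proof
  fix x
  assume x: "x \<in> (\<Inter>n. small_oscillation_set T f (inverse (Suc n)))"
  show "x \<in> cont_points T f"
    unfolding cont_points_def
  proof (intro CollectI allI impI)
    fix V :: "real set"
    assume "open V \<and> f x \<in> V"
    then obtain e where "e > 0" "ball (f x) e \<subseteq> V"
      using open_contains_ball by blast
    moreover obtain n where n: "inverse (real (Suc n)) < e"
      using \<open>e > 0\<close> reals_Archimedean by blast
    moreover obtain U where "openin T U" "x \<in> U"
      "\<forall>y\<in>U. \<forall>z\<in>U. \<bar>f y - f z\<bar> < inverse (real (Suc n))"
      using x unfolding small_oscillation_set_def by blast
    ultimately show "\<exists>U. openin T U \<and> x \<in> U \<and> f ` U \<subseteq> V"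
      by (intro exI[of _ U]) (force simp: dist_real_def)
  qed
qed

lemma meager_Compl_if_openin_dense:
  assumes euclidean_le: "\<forall>U. open U \<longrightarrow> openin T U"
    and baire_nonmeager: "\<forall>U. openin T U \<and> U \<noteq> {} \<longrightarrow> baire_set U \<and> \<not> meager U"
    and "openin T S"
    and dense: "\<And>V. open V \<Longrightarrow> V \<noteq> {} \<Longrightarrow> S \<inter> V \<noteq> {}"
  shows "meager (- S)"
proof -
  have "S \<noteq> {}"
    using dense[of UNIV] by auto
  then obtain G M where GM: "open G" "meager M" "S = (G - M) \<union> (M - G)"
    using baire_nonmeager \<open>openin T S\<close> unfolding baire_set_def by blast
  have "S \<inter> - closure G = {}"
  proof (rule ccontr)
    assume "S \<inter> - closure G \<noteq> {}"
    moreover have "openin T (S \<inter> - closure G)"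
      using \<open>openin T S\<close> euclidean_le by (simp add: openin_Int open_Compl)
    ultimately have "\<not> meager (S \<inter> - closure G)"
      using baire_nonmeager by blast
    moreover have "S \<inter> - closure G \<subseteq> M"
      using GM(3) closure_subset by blast
    ultimately show False
      using meager_subset[OF GM(2)] by blast
  qed
  then have "- closure G = {}"
    using dense[of "- closure G"] by auto
  then have "- S \<subseteq> (closure G - G) \<union> M"
    using GM(3) by blast
  moreover have "meager ((closure G - G) \<union> M)"
    by (intro meager_Un nowhere_dense_imp_meager nowhere_dense_closure_Diff_open GM)
  ultimately show ?thesis
    using meager_subset by blast
qed

lemma baire_fun_if_meager_discontinuities:
  assumes "\<And>U. openin T U \<Longrightarrow> baire_set U"
    and "meager (- cont_points T f)"
  shows "baire_fun f"
  unfolding baire_fun_def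
proof (intro allI impI)
  fix V :: "real set"
  assume "open V"
  let ?W = "T interior_of (f -` V)"
  have "f -` V - ?W \<subseteq> - cont_points T f"
  proof
    fix x
    assume x: "x \<in> f -` V - ?W"
    show "x \<in> - cont_points T f"
    proof
      assume "x \<in> cont_points T f"
      then obtain U where "openin T U" "x \<in> U" "f ` U \<subseteq> V"
        using \<open>open V\<close> x unfolding cont_points_def by blast
      then have "x \<in> ?W"
        using interior_of_maximal[of U "f -` V" T] by blast
      with x show False
        by blast
    qed
  qed
  then have "(?W - f -` V) \<union> (f -` V - ?W) \<subseteq> - cont_points T f"
    using interior_of_subset[of T "f -` V"] by blast
  then have "meager ((?W - f -` V) \<union> (f -` V - ?W))"
    by (rule meager_subset[OF assms(2)])
  then show "baire_set (f -` V)"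
    by (rule baire_set_meager_sym_diff[OF assms(1)[OF openin_interior_of]])
qed

theorem mainTheorem10:
  fixes T :: "real topology" and f :: "real \<Rightarrow> real"
  assumes "topspace T = UNIV"
    and "\<forall>U. open U \<longrightarrow> openin T U"
    and "\<forall>U. openin T U \<and> U \<noteq> {} \<longrightarrow> baire_set U \<and> \<not> meager U"
    and "swiatkowski T f"
  shows "baire_fun f"
proof (rule baire_fun_if_meager_discontinuities)
  show "baire_set U" if "openin T U" for U
    using assms(3) that baire_set_empty by (cases "U = {}") auto
  have "meager (- small_oscillation_set T f (inverse (Suc n)))" for n
  proof (rule meager_Compl_if_openin_dense[OF assms(2,3) openin_small_oscillation_set])
    fix V :: "real set"
    assume "open V" "V \<noteq> {}"
    then show "small_oscillation_set T f (inverse (Suc n)) \<inter> V \<noteq> {}"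
      using swiatkowski_cont_points_dense[OF assms(4,2)]
        cont_points_subset_small_oscillation_set[of "inverse (Suc n)" T f] by auto
  qed
  then have "meager (\<Union>n. - small_oscillation_set T f (inverse (Suc n)))"
    by (rule meager_UN)
  moreover have "- cont_points T f \<subseteq> (\<Union>n. - small_oscillation_set T f (inverse (Suc n)))"
    using INT_small_oscillation_set_subset_cont_points[of T f] by blast
  ultimately show "meager (- cont_points T f)"
    by (rule meager_subset)
qed

end
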